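(* For any matroid $L$ on a finite set $U$ and any $S\subseteq U$, the identity map on $U$ is a rank-preserving weak map $L|S\mathbin{\Box} L/S\rightarrow L$; that is, every independent set of $L$ is independent in $L|S\mathbin{\Box} L/S$, and the two matroids have the same rank.
   Context: For a matroid $M$ on $S$ write $\rho_M$ for rank, $\rho(M)=\rho_M(S)$, $\nu_M(A)=|A|-\rho_M(A)$, $\lambda_M(A)=\rho(M)-\rho_M(A)$. For matroids $M$ on $S$ and $N$ on $T$ with $S\cap T=\emptyset$, the free product $M\mathbin{\Box} N$ is the matroid on $S\cup T$ whose independent sets are those $A$ with $A\cap S$ independent in $M$ and $\lambda_M(A\cap S)\geq\nu_N(A\cap T)$. $L|S$ is the restriction to $S$ and $L/S$ the contraction of $S$ (on $U\setminus S$). The identity map is a weak map $L_1\to L_2$ between matroids on the same set if every independent set of $L_2$ is independent in $L_1$. *)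

theory Defs
  imports Main
begin

definition matroid :: "'a set \<Rightarrow> ('a set \<Rightarrow> bool) \<Rightarrow> bool" where
  "matroid E indep \<longleftrightarrow>
     finite E \<and>
     (\<forall>I. indep I \<longrightarrow> I \<subseteq> E) \<and>
     indep {} \<and>
     (\<forall>I J. indep J \<and> I \<subseteq> J \<longrightarrow> indep I) \<and>
     (\<forall>I J. indep I \<and> indep J \<and> card I < card J \<longrightarrow>
        (\<exists>x\<in>J - I. indep (insert x I)))"

definition rk :: "('a set \<Rightarrow> bool) \<Rightarrow> 'a set \<Rightarrow> nat" where
  "rk indep A = Max {card I | I. I \<subseteq> A \<and> indep I}"

definition mrank :: "'a set \<Rightarrow> ('a set \<Rightarrow> bool) \<Rightarrow> nat" where
  "mrank E indep = rk indep E"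

definition nullity :: "('a set \<Rightarrow> bool) \<Rightarrow> 'a set \<Rightarrow> nat" where
  "nullity indep A = card A - rk indep A"

definition lam :: "'a set \<Rightarrow> ('a set \<Rightarrow> bool) \<Rightarrow> 'a set \<Rightarrow> nat" where
  "lam E indep A = mrank E indep - rk indep A"

definition restr :: "('a set \<Rightarrow> bool) \<Rightarrow> 'a set \<Rightarrow> ('a set \<Rightarrow> bool)" where
  "restr indep S = (\<lambda>I. I \<subseteq> S \<and> indep I)"

definition contr :: "'a set \<Rightarrow> ('a set \<Rightarrow> bool) \<Rightarrow> 'a set \<Rightarrow> ('a set \<Rightarrow> bool)" where
  "contr U indep S = (\<lambda>I. I \<subseteq> U - S \<and> rk indep (I \<union> S) = card I + rk indep S)"

definition free_product ::
  "'a set \<Rightarrow> ('a set \<Rightarrow> bool) \<Rightarrow> 'a set \<Rightarrow> ('a set \<Rightarrow> bool) \<Rightarrow> ('a set \<Rightarrow> bool)" where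
  "free_product S indM T indN = (\<lambda>A. A \<subseteq> S \<union> T \<and> indM (A \<inter> S) \<and>
       lam S indM (A \<inter> S) \<ge> nullity indN (A \<inter> T))"

end

theory Submission
  imports Defs
begin

text \<open>Let I be independent in L. Extend I \<inter> S to a basis B of S and augment B from I
  to an independent J with |J| \<ge> |I|. The new elements J - B lie in I - S and are independent
  in L/S, so |I| - \<rho>(S) \<le> \<rho>_{L/S}(I - S); this inequality is exactly the free-product
  condition for I. Conversely every set A independent in the free product satisfies
  |A| \<le> \<rho>(S) + \<rho>_{L/S}(A - S), and the right-hand side is the rank of S together with a
  set independent in L/S, hence at most \<rho>(L).\<close>

text \<open>Just enough structure for rk to be an attained maximum. L/S and the free product are
  only used through this.\<close>

definition indep_family :: "'a set \<Rightarrow> ('a set \<Rightarrow> bool) \<Rightarrow> bool" where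
  "indep_family E indep \<longleftrightarrow> finite E \<and> (\<forall>I. indep I \<longrightarrow> I \<subseteq> E) \<and> indep {}"

lemma matroid_indep_family: "matroid E indep \<Longrightarrow> indep_family E indep"
  unfolding matroid_def indep_family_def by blast

lemma indep_family_finite:
  assumes "indep_family E indep" "indep I"
  shows "finite I"
  using assms unfolding indep_family_def by (meson finite_subset)

lemma finite_card_indep_subsets:
  assumes "indep_family E indep"
  shows "finite {card I | I. I \<subseteq> A \<and> indep I}"
proof -
  have "{card I | I. I \<subseteq> A \<and> indep I} \<subseteq> {..card E}"
    using assms unfolding indep_family_def by (auto intro!: card_mono)
  then show ?thesis
    using finite_subset by blast
qed

lemma card_le_rk:
  assumes "indep_family E indep" "I \<subseteq> A" "indep I"
  shows "card I \<le> rk indep A"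
  unfolding rk_def using assms by (intro Max_ge[OF finite_card_indep_subsets]) auto

lemma rk_obtains_indep:
  assumes "indep_family E indep"
  obtains I where "I \<subseteq> A" "indep I" "card I = rk indep A"
proof -
  have "{card I | I. I \<subseteq> A \<and> indep I} \<noteq> {}"
    using assms unfolding indep_family_def by blast
  then have "rk indep A \<in> {card I | I. I \<subseteq> A \<and> indep I}"
    unfolding rk_def by (rule Max_in[OF finite_card_indep_subsets[OF assms]])
  then show ?thesis
    using that by auto
qed

lemma rk_le_card:
  assumes "indep_family E indep" "finite A"
  shows "rk indep A \<le> card A"
  using rk_obtains_indep[OF assms(1), of A] assms(2) by (metis card_mono)

lemma rk_mono:
  assumes "indep_family E indep" "A \<subseteq> B"
  shows "rk indep A \<le> rk indep B"
  using rk_obtains_indep[OF assms(1), of A] card_le_rk[OF assms(1)] assms(2) by (metis order_trans)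

lemma rk_indep:
  assumes "indep_family E indep" "indep I"
  shows "rk indep I = card I"
  using card_le_rk[OF assms(1) order_refl assms(2)] rk_le_card[OF assms(1)]
    indep_family_finite[OF assms] by (simp add: le_antisym)

lemma rk_le_rk_if_indep_imp:
  assumes "indep_family E indep\<^sub>1" "indep_family E indep\<^sub>2" "\<And>I. indep\<^sub>1 I \<Longrightarrow> indep\<^sub>2 I"
  shows "rk indep\<^sub>1 A \<le> rk indep\<^sub>2 A"
  using rk_obtains_indep[OF assms(1), of A] card_le_rk[OF assms(2)] assms(3) by metis

lemma rk_Un_le:
  assumes "matroid E indep"
  shows "rk indep (A \<union> B) \<le> rk indep A + rk indep B"
proof -
  have fam: "indep_family E indep"
    using matroid_indep_family[OF assms] .
  have down: "indep J \<Longrightarrow> I \<subseteq> J \<Longrightarrow> indep I" for I J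
    using assms unfolding matroid_def by blast
  obtain K where K: "K \<subseteq> A \<union> B" "indep K" "card K = rk indep (A \<union> B)"
    using rk_obtains_indep[OF fam] by blast
  have "card K \<le> card (K \<inter> A) + card (K - A)"
    by (metis Int_Diff_Un card_Un_le)
  also have "\<dots> \<le> rk indep A + rk indep B"
    using card_le_rk[OF fam, of "K \<inter> A" A] card_le_rk[OF fam, of "K - A" B] K down
    by (intro add_mono) blast+
  finally show ?thesis
    using K by simp
qed

lemma matroid_augment:
  assumes "matroid E indep" "indep B" "indep I"
  obtains J where "indep J" "B \<subseteq> J" "J \<subseteq> B \<union> I" "card I \<le> card J"
proof -
  have fam: "indep_family E indep"
    using matroid_indep_family[OF assms(1)] .
  let ?P = "\<lambda>J. indep J \<and> B \<subseteq> J \<and> J \<subseteq> B \<union> I"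
  have "\<forall>J. ?P J \<longrightarrow> card J < Suc (card E)"
    using fam unfolding indep_family_def by (meson card_mono le_imp_less_Suc)
  then obtain J where J: "?P J" and J_max: "\<And>J'. ?P J' \<Longrightarrow> card J' \<le> card J"
    using ex_has_greatest_nat[of ?P B card "Suc (card E)"] assms(2) by blast
  have "card I \<le> card J"
  proof (rule ccontr)
    assume "\<not> card I \<le> card J"
    then obtain x where x: "x \<in> I - J" "indep (insert x J)"
      using assms(1,3) J unfolding matroid_def by (meson not_le)
    then have "card (insert x J) = Suc (card J)"
      using indep_family_finite[OF fam] J by simp
    moreover have "?P (insert x J)"
      using x J by auto
    ultimately show False
      using J_max by fastforce
  qed
  then show ?thesis
    using that J by blast
qed

lemma matroid_extend_to_basis:
  assumes "matroid E indep" "indep X" "X \<subseteq> S"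
  obtains B where "indep B" "X \<subseteq> B" "B \<subseteq> S" "card B = rk indep S"
proof -
  have fam: "indep_family E indep"
    using matroid_indep_family[OF assms(1)] .
  obtain B\<^sub>0 where B\<^sub>0: "B\<^sub>0 \<subseteq> S" "indep B\<^sub>0" "card B\<^sub>0 = rk indep S"
    using rk_obtains_indep[OF fam] by blast
  obtain B where B: "indep B" "X \<subseteq> B" "B \<subseteq> X \<union> B\<^sub>0" "card B\<^sub>0 \<le> card B"
    using matroid_augment[OF assms(1,2) B\<^sub>0(2)] by blast
  have "B \<subseteq> S"
    using B(3) B\<^sub>0(1) assms(3) by blast
  moreover have "card B = rk indep S"
    using card_le_rk[OF fam \<open>B \<subseteq> S\<close> B(1)] B(4) B\<^sub>0(3) by linarith
  ultimately show ?thesis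
    using that B by blast
qed

lemma rk_restr:
  assumes "X \<subseteq> S"
  shows "rk (restr indep S) X = rk indep X"
proof -
  have "{card I | I. I \<subseteq> X \<and> restr indep S I} = {card I | I. I \<subseteq> X \<and> indep I}"
    using assms unfolding restr_def by blast
  then show ?thesis
    unfolding rk_def by simp
qed

lemma indep_family_restr:
  assumes "indep_family E indep" "S \<subseteq> E"
  shows "indep_family S (restr indep S)"
  using assms unfolding indep_family_def restr_def by (auto intro: finite_subset)

lemma indep_family_contr:
  assumes "finite E"
  shows "indep_family (E - S) (contr E indep S)"
  using assms unfolding indep_family_def contr_def by auto

lemma free_product_iff:
  assumes M: "indep_family S indM" and N: "indep_family T indN" and "S \<inter> T = {}"
  shows "free_product S indM T indN A \<longleftrightarrow>
    A \<subseteq> S \<union> T \<and> indM (A \<inter> S) \<and> card A \<le> mrank S indM + rk indN (A \<inter> T)"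
proof (cases "A \<subseteq> S \<union> T \<and> indM (A \<inter> S)")
  case True
  have "finite (A \<inter> S)" "finite (A \<inter> T)"
    using M N unfolding indep_family_def by auto
  moreover have "A = (A \<inter> S) \<union> (A \<inter> T)"
    using True by blast
  ultimately have "card A = card (A \<inter> S) + card (A \<inter> T)"
    using assms(3) by (metis card_Un_disjoint inf_assoc inf_bot_right inf_left_commute)
  moreover have "rk indM (A \<inter> S) = card (A \<inter> S)"
    using rk_indep[OF M] True by blast
  moreover have "card (A \<inter> S) \<le> mrank S indM"
    unfolding mrank_def using card_le_rk[OF M _ conjunct2[OF True]] by blast
  moreover have "rk indN (A \<inter> T) \<le> card (A \<inter> T)"
    using rk_le_card[OF N] \<open>finite (A \<inter> T)\<close> .
  ultimately have "card (A \<inter> T) - rk indN (A \<inter> T) \<le> mrank S indM - rk indM (A \<inter> S)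
      \<longleftrightarrow> card A \<le> mrank S indM + rk indN (A \<inter> T)"
    by linarith
  then show ?thesis
    unfolding free_product_def lam_def nullity_def using True by simp
qed (auto simp: free_product_def)

lemma indep_family_free_product:
  assumes "indep_family S indM" "indep_family T indN" "S \<inter> T = {}"
  shows "indep_family (S \<union> T) (free_product S indM T indN)"
  using assms unfolding free_product_iff[OF assms] by (simp add: indep_family_def)

lemma free_product_restr_contr_iff:
  assumes L: "indep_family U indL" and "S \<subseteq> U"
  shows "free_product S (restr indL S) (U - S) (contr U indL S) A \<longleftrightarrow>
    A \<subseteq> U \<and> indL (A \<inter> S) \<and> card A \<le> rk indL S + rk (contr U indL S) (A - S)"
proof -
  have U: "S \<union> (U - S) = U" "finite U" "S \<inter> (U - S) = {}"
    using assms unfolding indep_family_def by auto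
  have "mrank S (restr indL S) = rk indL S"
    unfolding mrank_def by (simp add: rk_restr)
  moreover have "A \<subseteq> U \<Longrightarrow> A \<inter> (U - S) = A - S"
    by blast
  ultimately show ?thesis
    using free_product_iff[OF indep_family_restr[OF L assms(2)] indep_family_contr[OF U(2)] U(3)]
    unfolding U(1) restr_def by auto
qed

lemma card_le_rk_add_rk_contr:
  assumes L: "matroid U indL" and I: "indL I"
  shows "card I \<le> rk indL S + rk (contr U indL S) (I - S)"
proof -
  have fam: "indep_family U indL"
    using matroid_indep_family[OF L] .
  then have "finite U" "I \<subseteq> U"
    using I unfolding indep_family_def by auto
  have "indL (I \<inter> S)"
    using L I unfolding matroid_def by blast
  then obtain B where B: "indL B" "I \<inter> S \<subseteq> B" "B \<subseteq> S" "card B = rk indL S"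
    using matroid_extend_to_basis[OF L] by blast
  obtain J where J: "indL J" "B \<subseteq> J" "J \<subseteq> B \<union> I" "card I \<le> card J"
    using matroid_augment[OF L B(1) I] by blast
  define Z where "Z = J - B"
  have Z_sub: "Z \<subseteq> I - S"
    using B(2) J(3) unfolding Z_def by blast
  have "finite J"
    using indep_family_finite[OF fam J(1)] .
  then have card_J: "card J = card B + card Z"
    unfolding Z_def using J(2) card_Diff_subset[of B J] card_mono[of J B]
    by (simp add: finite_subset)
  have "contr U indL S Z"
    unfolding contr_def
  proof
    show "Z \<subseteq> U - S"
      using Z_sub \<open>I \<subseteq> U\<close> by blast
    have "card J \<le> rk indL (Z \<union> S)"
      using B(3) unfolding Z_def by (intro card_le_rk[OF fam _ J(1)]) blast
    moreover have "rk indL (Z \<union> S) \<le> card Z + rk indL S"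
      using rk_Un_le[OF L, of Z S] rk_le_card[OF fam, of Z] \<open>finite J\<close>
      unfolding Z_def by simp
    ultimately show "rk indL (Z \<union> S) = card Z + rk indL S"
      using card_J B(4) by linarith
  qed
  then have "card Z \<le> rk (contr U indL S) (I - S)"
    by (rule card_le_rk[OF indep_family_contr[OF \<open>finite U\<close>] Z_sub])
  then show ?thesis
    using card_J B(4) J(4) by linarith
qed

lemma rk_contr_add_rk_le:
  assumes "indep_family U indL"
  shows "rk (contr U indL S) Y + rk indL S \<le> rk indL (Y \<union> S)"
proof -
  have "finite U"
    using assms unfolding indep_family_def by blast
  then obtain Z where Z: "Z \<subseteq> Y" "contr U indL S Z" "card Z = rk (contr U indL S) Y"
    by (rule rk_obtains_indep[OF indep_family_contr])
  have "rk (contr U indL S) Y + rk indL S = rk indL (Z \<union> S)"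
    using Z(2,3) unfolding contr_def by linarith
  also have "\<dots> \<le> rk indL (Y \<union> S)"
    using Z(1) by (intro rk_mono[OF assms]) blast
  finally show ?thesis .
qed

theorem proposition4p2:
  fixes U S :: "'a set" and indL :: "'a set \<Rightarrow> bool"
  assumes "matroid U indL" and "S \<subseteq> U"
  shows "(\<forall>I. indL I \<longrightarrow> free_product S (restr indL S) (U - S) (contr U indL S) I)
       \<and> mrank U (free_product S (restr indL S) (U - S) (contr U indL S)) = mrank U indL"
proof -
  let ?N = "contr U indL S"
  let ?F = "free_product S (restr indL S) (U - S) ?N"
  have L: "indep_family U indL"
    using matroid_indep_family[OF assms(1)] .
  have "finite U" "S \<union> (U - S) = U"
    using L assms(2) unfolding indep_family_def by auto
  then have F: "indep_family U ?F"
    using indep_family_free_product[OF indep_family_restr[OF L assms(2)]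
        indep_family_contr Diff_disjoint] by metis
  have weak_map: "?F I" if "indL I" for I
  proof -
    have "I \<subseteq> U" "indL (I \<inter> S)"
      using that assms(1) unfolding matroid_def by blast+
    then show ?thesis
      using card_le_rk_add_rk_contr[OF assms(1) that] free_product_restr_contr_iff[OF L assms(2)]
      by blast
  qed
  obtain A where A: "A \<subseteq> U" "?F A" "card A = rk ?F U"
    using rk_obtains_indep[OF F] by blast
  have "rk ?F U \<le> rk indL S + rk ?N (A - S)"
    using A free_product_restr_contr_iff[OF L assms(2)] by simp
  also have "\<dots> \<le> rk indL (A - S \<union> S)"
    using rk_contr_add_rk_le[OF L, of S "A - S"] by linarith
  also have "\<dots> \<le> rk indL U"
    using A(1) assms(2) by (intro rk_mono[OF L]) blast
  finally have "rk ?F U \<le> rk indL U" .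
  moreover have "rk indL U \<le> rk ?F U"
    using rk_le_rk_if_indep_imp[OF L F] weak_map .
  ultimately show ?thesis
    using weak_map unfolding mrank_def by simp
qed

end
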